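(* Let $\Phi(x_1,\dots,x_n)$ be an open formula of the language $\mathcal{L}_{\mathrm{pAb}}$ with $n$ variables, and let $N=\sharp(\Phi)$. Assume that $\mathbf{R}_{-1}\models\exists x_1\cdots\exists x_n\,\Phi$. Then there are integers $c$ and $M$ and real numbers $a_1,\dots,a_n$ such that $\Phi(a_1,\dots,a_n)$ holds in $\mathbf{R}_{-1}$, $-2^M\le a_i\le 2^M$ for each $1\le i\le n$, and the binary representation of $M$ has at most $cN\log_2 N$ bits.
   Context: $\mathcal{L}_{\mathrm{pAb}}=\langle +,-,0,-1,\wedge,\vee\rangle$ is the language of pointed abelian lattice-ordered groups. $\mathbf{R}_{-1}=\langle \mathbb{R},+,-,\wedge,\vee,0,-1\rangle$ is the additive group of the reals with $\wedge=\min$, $\vee=\max$, and constant $-1$ interpreted as $-1$. An open formula is a finite Boolean combination (negation, conjunction, disjunction) of atoms $\phi=\psi$ with $\phi,\psi$ terms. The size $\sharp(\phi)$ of a term is the number of occurrences of variables and constants in $\phi$; the size $\sharp(\Phi)$ of an open formula is the sum of the sizes of all occurrences of terms in its atoms. *)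

theory Defs
  imports Complex_Main
begin

datatype pterm =
    Var nat
  | Zero
  | MinusOne
  | Add pterm pterm
  | Neg pterm
  | Meet pterm pterm
  | Join pterm pterm

datatype pform =
    Eq pterm pterm
  | FNot pform
  | FAnd pform pform
  | FOr pform pform

fun tsize :: "pterm \<Rightarrow> nat" where
  "tsize (Var i) = 1"
| "tsize Zero = 1"
| "tsize MinusOne = 1"
| "tsize (Add s t) = tsize s + tsize t"
| "tsize (Neg t) = tsize t"
| "tsize (Meet s t) = tsize s + tsize t"
| "tsize (Join s t) = tsize s + tsize t"

fun fsize :: "pform \<Rightarrow> nat" where
  "fsize (Eq s t) = tsize s + tsize t"
| "fsize (FNot f) = fsize f"
| "fsize (FAnd f g) = fsize f + fsize g"
| "fsize (FOr f g) = fsize f + fsize g"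

fun tvars :: "pterm \<Rightarrow> nat set" where
  "tvars (Var i) = {i}"
| "tvars Zero = {}"
| "tvars MinusOne = {}"
| "tvars (Add s t) = tvars s \<union> tvars t"
| "tvars (Neg t) = tvars t"
| "tvars (Meet s t) = tvars s \<union> tvars t"
| "tvars (Join s t) = tvars s \<union> tvars t"

fun fvars :: "pform \<Rightarrow> nat set" where
  "fvars (Eq s t) = tvars s \<union> tvars t"
| "fvars (FNot f) = fvars f"
| "fvars (FAnd f g) = fvars f \<union> fvars g"
| "fvars (FOr f g) = fvars f \<union> fvars g"

fun teval :: "(nat \<Rightarrow> real) \<Rightarrow> pterm \<Rightarrow> real" where
  "teval a (Var i) = a i"
| "teval a Zero = 0"
| "teval a MinusOne = -1"
| "teval a (Add s t) = teval a s + teval a t"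
| "teval a (Neg t) = - teval a t"
| "teval a (Meet s t) = min (teval a s) (teval a t)"
| "teval a (Join s t) = max (teval a s) (teval a t)"

fun fholds :: "(nat \<Rightarrow> real) \<Rightarrow> pform \<Rightarrow> bool" where
  "fholds a (Eq s t) = (teval a s = teval a t)"
| "fholds a (FNot f) = (\<not> fholds a f)"
| "fholds a (FAnd f g) = (fholds a f \<and> fholds a g)"
| "fholds a (FOr f g) = (fholds a f \<or> fholds a g)"

text \<open>Number of bits of the binary representation of a natural number (0 has 0 digits).\<close>
fun nbits :: "nat \<Rightarrow> nat" where
  "nbits n = (if n = 0 then 0 else Suc (nbits (n div 2)))"

definition ibits :: "int \<Rightarrow> nat" where
  "ibits M = nbits (nat \<bar>M\<bar>) + 1"

end

theory Submission
  imports Defs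
begin

(* Fix a model x of \<Phi>. Near x every term is affine: each meet or join can be replaced by the
   argument that is active at x. So \<Phi> still holds at every point y at which finitely many affine
   forms with integer coefficients (differences of the compared and of the equated affine pieces)
   have the same signs as at x, and with N = fsize \<Phi> their coefficients are bounded by N.
   Such a sign pattern is realised at a point with small coordinates, chosen one variable at a time:
   first a point for the other variables is chosen for the family enlarged by all combinations
   c2 L1 - c1 L2 that cancel the variable, which fixes the order of the roots of the forms in that
   variable, and then the variable is placed in the same gap between the roots as at x. Each step
   squares the coefficient bound; the coordinates end up below 2^2^(3N), so M = 2^(3N) has O(N) bits. *)

datatype aform = Aff (coeff: "nat \<Rightarrow> int") (offset: int)

definition aeval :: "nat set \<Rightarrow> aform \<Rightarrow> (nat \<Rightarrow> real) \<Rightarrow> real" where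
  "aeval V L y = (\<Sum>i\<in>V. of_int (coeff L i) * y i) + of_int (offset L)"

definition avar :: "nat \<Rightarrow> aform" where
  "avar i = Aff (\<lambda>j. if j = i then 1 else 0) 0"

definition aconst :: "int \<Rightarrow> aform" where
  "aconst c = Aff (\<lambda>_. 0) c"

definition aadd :: "aform \<Rightarrow> aform \<Rightarrow> aform" where
  "aadd L1 L2 = Aff (\<lambda>j. coeff L1 j + coeff L2 j) (offset L1 + offset L2)"

definition asmult :: "int \<Rightarrow> aform \<Rightarrow> aform" where
  "asmult k L = Aff (\<lambda>j. k * coeff L j) (k * offset L)"

definition aneg :: "aform \<Rightarrow> aform" where
  "aneg L = asmult (-1) L"

definition adiff :: "aform \<Rightarrow> aform \<Rightarrow> aform" where
  "adiff L1 L2 = aadd L1 (aneg L2)"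

definition aelim :: "nat \<Rightarrow> aform \<Rightarrow> aform \<Rightarrow> aform" where
  "aelim v L1 L2 = adiff (asmult (coeff L2 v) L1) (asmult (coeff L1 v) L2)"

lemma aeval_avar [simp]:
  assumes "finite V" "i \<in> V"
  shows "aeval V (avar i) y = y i"
proof -
  have "(\<Sum>j\<in>V. of_int (if j = i then 1 else 0) * y j) = (\<Sum>j\<in>V. if j = i then y j else 0)"
    by (rule sum.cong) auto
  then show ?thesis using assms by (simp add: aeval_def avar_def)
qed

lemma aeval_aconst [simp]: "aeval V (aconst c) y = of_int c"
  by (simp add: aeval_def aconst_def)

lemma aeval_aadd [simp]: "aeval V (aadd L1 L2) y = aeval V L1 y + aeval V L2 y"
  by (simp add: aeval_def aadd_def sum.distrib distrib_right)

lemma aeval_asmult [simp]: "aeval V (asmult k L) y = of_int k * aeval V L y"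
  by (simp add: aeval_def asmult_def sum_distrib_left distrib_left mult.assoc)

lemma aeval_aneg [simp]: "aeval V (aneg L) y = - aeval V L y"
  by (simp add: aneg_def)

lemma aeval_adiff [simp]: "aeval V (adiff L1 L2) y = aeval V L1 y - aeval V L2 y"
  by (simp add: adiff_def)

lemma aeval_aelim:
  "aeval V (aelim v L1 L2) y = of_int (coeff L2 v) * aeval V L1 y - of_int (coeff L1 v) * aeval V L2 y"
  by (simp add: aelim_def)

lemma aeval_insert:
  "finite V \<Longrightarrow> v \<notin> V \<Longrightarrow> aeval (insert v V) L y = of_int (coeff L v) * y v + aeval V L y"
  by (simp add: aeval_def)

lemma aeval_fun_upd [simp]: "v \<notin> V \<Longrightarrow> aeval V L (y(v := t)) = aeval V L y"
  unfolding aeval_def by (auto intro!: sum.cong)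

definition abounded :: "int \<Rightarrow> aform \<Rightarrow> bool" where
  "abounded B L \<longleftrightarrow> (\<forall>j. \<bar>coeff L j\<bar> \<le> B) \<and> \<bar>offset L\<bar> \<le> B"

lemma abounded_mono: "abounded A L \<Longrightarrow> A \<le> B \<Longrightarrow> abounded B L"
  unfolding abounded_def by (meson order_trans)

lemma abounded_aadd: "abounded A L1 \<Longrightarrow> abounded B L2 \<Longrightarrow> abounded (A + B) (aadd L1 L2)"
  unfolding abounded_def aadd_def by (auto intro: abs_triangle_ineq[THEN order_trans] add_mono)

lemma abounded_asmult: "abounded A L \<Longrightarrow> \<bar>k\<bar> \<le> K \<Longrightarrow> abounded (K * A) (asmult k L)"
  unfolding abounded_def asmult_def by (auto simp: abs_mult intro: mult_mono)

lemma abounded_aneg: "abounded A L \<Longrightarrow> abounded A (aneg L)"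
  using abounded_asmult[of A L "-1" 1] by (simp add: aneg_def)

lemma abounded_adiff: "abounded A L1 \<Longrightarrow> abounded B L2 \<Longrightarrow> abounded (A + B) (adiff L1 L2)"
  by (simp add: adiff_def abounded_aadd abounded_aneg)

lemma abounded_aelim: "abounded B L1 \<Longrightarrow> abounded B L2 \<Longrightarrow> abounded (2 * B\<^sup>2) (aelim v L1 L2)"
proof -
  assume L1: "abounded B L1" and L2: "abounded B L2"
  then have "\<bar>coeff L1 v\<bar> \<le> B" "\<bar>coeff L2 v\<bar> \<le> B" by (auto simp: abounded_def)
  then have "abounded (B * B + B * B) (aelim v L1 L2)"
    unfolding aelim_def using L1 L2 by (intro abounded_adiff abounded_asmult)
  then show ?thesis by (simp add: power2_eq_square)
qed

lemma aeval_abs_le: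
  assumes "abounded B L" "finite V" "\<And>i. i \<in> V \<Longrightarrow> \<bar>y i\<bar> \<le> r"
  shows "\<bar>aeval V L y\<bar> \<le> real (card V) * of_int B * r + of_int B"
proof -
  have coeff: "\<bar>of_int (coeff L i)\<bar> \<le> (of_int B :: real)" for i
    using assms(1) unfolding abounded_def by (metis of_int_abs of_int_le_iff)
  have "\<bar>\<Sum>i\<in>V. of_int (coeff L i) * y i\<bar> \<le> (\<Sum>i\<in>V. \<bar>of_int (coeff L i)\<bar> * \<bar>y i\<bar>)"
    unfolding abs_mult[symmetric] by (rule sum_abs)
  also have "\<dots> \<le> (\<Sum>i\<in>V. of_int B * r)"
    using coeff assms(3) order_trans[OF abs_ge_zero coeff] by (intro sum_mono mult_mono) auto
  finally have "\<bar>\<Sum>i\<in>V. of_int (coeff L i) * y i\<bar> \<le> real (card V) * of_int B * r" by simp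
  moreover have "\<bar>of_int (offset L)\<bar> \<le> (of_int B :: real)"
    using assms(1) unfolding abounded_def by (metis of_int_abs of_int_le_iff)
  ultimately show ?thesis unfolding aeval_def by linarith
qed

lemma exists_point_in_same_cut:
  fixes f g :: "'a \<Rightarrow> real"
  assumes "finite I"
    and same_order: "\<And>i j. i \<in> I \<Longrightarrow> j \<in> I \<Longrightarrow> sgn (f i - f j) = sgn (g i - g j)"
    and g_bounded: "\<And>i. i \<in> I \<Longrightarrow> \<bar>g i\<bar> \<le> C" and "0 \<le> C"
  shows "\<exists>t. (\<forall>i\<in>I. sgn (t - g i) = sgn (s - f i)) \<and> \<bar>t\<bar> \<le> C + 1"
proof (cases "\<exists>i\<in>I. f i = s")
  case True
  then obtain i0 where "i0 \<in> I" "f i0 = s" by blast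
  then show ?thesis using same_order g_bounded by (intro exI[of _ "g i0"]) fastforce
next
  case False
  have less: "g i < g j" if "i \<in> I" "j \<in> I" "f i < f j" for i j
    using same_order[OF that(1,2)] that(3) by (auto simp: sgn_if split: if_splits)
  define lo where "lo = Max (insert (- C - 1) (g ` {i\<in>I. f i < s}))"
  define hi where "hi = Min (insert (C + 1) (g ` {i\<in>I. s < f i}))"
  have fin: "finite (g ` {i\<in>I. f i < s})" "finite (g ` {i\<in>I. s < f i})"
    using \<open>finite I\<close> by auto
  have "lo < hi"
    unfolding lo_def hi_def using fin \<open>0 \<le> C\<close> g_bounded less
    by (fastforce simp: abs_le_iff)
  have "- C - 1 \<le> lo" "hi \<le> C + 1"
    unfolding lo_def hi_def using fin by auto
  have below: "g i \<le> lo" if "i \<in> I" "f i < s" for i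
    unfolding lo_def using fin that by auto
  have above: "hi \<le> g i" if "i \<in> I" "s < f i" for i
    unfolding hi_def using fin that by auto
  show ?thesis
  proof (intro exI[of _ "(lo + hi) / 2"] conjI ballI)
    fix i assume "i \<in> I"
    with False have "f i < s \<or> s < f i" by fastforce
    then show "sgn ((lo + hi) / 2 - g i) = sgn (s - f i)"
      using below[OF \<open>i \<in> I\<close>] above[OF \<open>i \<in> I\<close>] \<open>lo < hi\<close> by auto
  next
    show "\<bar>(lo + hi) / 2\<bar> \<le> C + 1"
      using \<open>- C - 1 \<le> lo\<close> \<open>hi \<le> C + 1\<close> \<open>lo < hi\<close> by (auto simp: abs_le_iff)
  qed
qed

definition signs_agree :: "nat set \<Rightarrow> aform set \<Rightarrow> (nat \<Rightarrow> real) \<Rightarrow> (nat \<Rightarrow> real) \<Rightarrow> bool" where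
  "signs_agree V F x y \<longleftrightarrow> (\<forall>L\<in>F. sgn (aeval V L y) = sgn (aeval V L x))"

definition aelim_closure :: "nat \<Rightarrow> aform set \<Rightarrow> aform set" where
  "aelim_closure v F = F \<union> (\<lambda>(L1, L2). aelim v L1 L2) ` (F \<times> F)"

lemma extend_signs_agree:
  assumes V: "finite V" "v \<notin> V" and "finite F"
    and agree: "signs_agree V (aelim_closure v F) x y"
    and bounded: "\<And>L. L \<in> F \<Longrightarrow> \<bar>aeval V L y\<bar> \<le> C" and "0 \<le> C"
  shows "\<exists>t. signs_agree (insert v V) F x (y(v := t)) \<and> \<bar>t\<bar> \<le> C + 1"
proof -
  define I where "I = {L\<in>F. coeff L v \<noteq> 0}"
  define root where "root L z = - aeval V L z / of_int (coeff L v)" for L z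
  have aeval_root: "aeval (insert v V) L z = of_int (coeff L v) * (z v - root L z)"
    if "L \<in> I" for L z
    using that V by (simp add: I_def root_def aeval_insert field_simps)
  have "sgn (root L1 x - root L2 x) = sgn (root L1 y - root L2 y)"
    if "L1 \<in> I" "L2 \<in> I" for L1 L2
  proof -
    have "root L1 z - root L2 z
        = - aeval V (aelim v L1 L2) z / (of_int (coeff L1 v) * of_int (coeff L2 v))" for z
      using that by (simp add: I_def root_def aeval_aelim field_simps)
    moreover have "aelim v L1 L2 \<in> aelim_closure v F"
      using that unfolding I_def aelim_closure_def by blast
    ultimately show ?thesis
      using agree by (simp add: signs_agree_def sgn_mult sgn_divide)
  qed
  moreover have "\<bar>root L y\<bar> \<le> C" if "L \<in> I" for L
  proof -
    have "\<bar>root L y\<bar> = \<bar>aeval V L y\<bar> / \<bar>of_int (coeff L v)\<bar>"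
      by (simp add: root_def abs_divide)
    also have "\<dots> \<le> \<bar>aeval V L y\<bar> / 1"
    proof (rule divide_left_mono)
      have "1 \<le> \<bar>coeff L v\<bar>" using that by (auto simp: I_def)
      then show "1 \<le> \<bar>real_of_int (coeff L v)\<bar>" by (metis of_int_1_le_iff of_int_abs)
    qed (use that in \<open>auto simp: I_def\<close>)
    also have "\<dots> \<le> C" using that bounded by (simp add: I_def)
    finally show ?thesis .
  qed
  ultimately obtain t where t: "\<forall>L\<in>I. sgn (t - root L y) = sgn (x v - root L x)" "\<bar>t\<bar> \<le> C + 1"
    using exists_point_in_same_cut[of I "\<lambda>L. root L x" "\<lambda>L. root L y" C "x v"] \<open>finite F\<close> \<open>0 \<le> C\<close>
    by (auto simp: I_def)
  have "sgn (aeval (insert v V) L (y(v := t))) = sgn (aeval (insert v V) L x)" if "L \<in> F" for L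
  proof (cases "L \<in> I")
    case True
    have "root L (y(v := t)) = root L y" using V by (simp add: root_def)
    then show ?thesis using True t by (simp add: aeval_root sgn_mult)
  next
    case False
    then show ?thesis
      using that agree V by (simp add: I_def aeval_insert signs_agree_def aelim_closure_def)
  qed
  then show ?thesis using t by (auto simp: signs_agree_def)
qed

(* Eliminating a variable squares the coefficient bound (to 2b^2); the other coordinates are then
   bounded by r = elim_bound n (2b^2) and the eliminated one by n b r + b + 1. *)
fun elim_bound :: "nat \<Rightarrow> real \<Rightarrow> real" where
  "elim_bound 0 b = 0"
| "elim_bound (Suc n) b = (real n + 1) * b * elim_bound n (2 * b\<^sup>2) + b + 1"

lemma elim_bound_nonneg: "0 \<le> b \<Longrightarrow> 0 \<le> elim_bound n b"
  by (induction n arbitrary: b) simp_all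

lemma signs_agree_at_bounded_point:
  assumes "finite V"
  shows "finite F \<Longrightarrow> 1 \<le> B \<Longrightarrow> \<forall>L\<in>F. abounded B L \<Longrightarrow>
    \<exists>y. signs_agree V F x y \<and> (\<forall>i. \<bar>y i\<bar> \<le> elim_bound (card V) (of_int B))"
  using assms
proof (induction V arbitrary: B F rule: finite_induct)
  case empty
  show ?case by (intro exI[of _ "\<lambda>_. 0"]) (simp add: signs_agree_def aeval_def)
next
  case (insert v V)
  have "B \<le> 2 * B\<^sup>2" using \<open>1 \<le> B\<close> by (simp add: power2_eq_square)
  then have "\<forall>L\<in>aelim_closure v F. abounded (2 * B\<^sup>2) L"
    using insert.prems(3) abounded_mono abounded_aelim by (auto simp: aelim_closure_def)
  moreover have "finite (aelim_closure v F)" using insert.prems(1) by (simp add: aelim_closure_def)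
  moreover have "1 \<le> 2 * B\<^sup>2" using \<open>B \<le> 2 * B\<^sup>2\<close> insert.prems(2) by linarith
  ultimately obtain y where agree: "signs_agree V (aelim_closure v F) x y"
    and y_bounded: "\<forall>i. \<bar>y i\<bar> \<le> elim_bound (card V) (of_int (2 * B\<^sup>2))"
    using insert.IH by blast
  define r where "r = elim_bound (card V) (of_int (2 * B\<^sup>2))"
  define C where "C = real (card V) * of_int B * r + of_int B"
  have "0 \<le> r" unfolding r_def using insert.prems(2) by (simp add: elim_bound_nonneg)
  then have "0 \<le> C" using insert.prems(2) by (simp add: C_def)
  moreover have "\<bar>aeval V L y\<bar> \<le> C" if "L \<in> F" for L
    unfolding C_def r_def using insert.prems(3) that insert.hyps(1) y_bounded
    by (intro aeval_abs_le) auto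
  ultimately obtain t where t: "signs_agree (insert v V) F x (y(v := t))" "\<bar>t\<bar> \<le> C + 1"
    using extend_signs_agree[OF insert.hyps(1,2) insert.prems(1) agree] by blast
  have bound_eq: "elim_bound (card (insert v V)) (of_int B)
      = (real (card V) + 1) * of_int B * r + of_int B + 1"
    using insert.hyps by (simp add: r_def)
  have "0 \<le> of_int B * r" using \<open>0 \<le> r\<close> insert.prems(2) by simp
  then have "C + 1 \<le> elim_bound (card (insert v V)) (of_int B)"
    unfolding bound_eq C_def by (simp add: algebra_simps)
  moreover have "1 \<le> (real (card V) + 1) * of_int B"
    using insert.prems(2) by (simp add: mult_ge1_I)
  then have "1 * r \<le> (real (card V) + 1) * of_int B * r"
    using \<open>0 \<le> r\<close> by (rule mult_right_mono)
  then have "r \<le> elim_bound (card (insert v V)) (of_int B)"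
    unfolding bound_eq using insert.prems(2) by simp
  ultimately have "\<bar>(y(v := t)) i\<bar> \<le> elim_bound (card (insert v V)) (of_int B)" for i
    using t(2) y_bounded unfolding r_def by (cases "i = v") (auto intro: order_trans)
  then show ?case using t(1) by blast
qed

lemma add_three_le_pow: "n + 3 \<le> (32::nat) ^ 4 ^ n"
proof -
  have "n < 32 ^ n" using less_exp[of n] power_mono[of "2::nat" 32 n] by linarith
  then have "n + 3 \<le> (32::nat) ^ (n + 1)" by simp
  also have "\<dots> \<le> 32 ^ 4 ^ n"
  proof (rule power_increasing)
    show "n + 1 \<le> 4 ^ n" using less_exp[of n] power_mono[of "2::nat" 4 n] by linarith
  qed simp
  finally show ?thesis .
qed

lemma elim_bound_le: "1 \<le> b \<Longrightarrow> elim_bound n b \<le> (4 * b) ^ 4 ^ n"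
proof (induction n arbitrary: b)
  case 0
  then show ?case by simp
next
  case (Suc n)
  define k :: nat where "k = 4 ^ n"
  define X where "X = (8 * b\<^sup>2) ^ k"
  have "1 \<le> b\<^sup>2" using Suc.prems by (simp add: one_le_power)
  then have IH: "elim_bound n (2 * b\<^sup>2) \<le> X"
    using Suc.IH[of "2 * b\<^sup>2"] by (simp add: X_def k_def)
  have "1 \<le> X" unfolding X_def using \<open>1 \<le> b\<^sup>2\<close> by (intro one_le_power) simp
  have "b \<le> (b\<^sup>2) ^ k"
  proof -
    have "b \<le> b\<^sup>2" using Suc.prems by (simp add: power2_eq_square)
    also have "\<dots> = (b\<^sup>2) ^ 1" by simp
    also have "\<dots> \<le> (b\<^sup>2) ^ k" using \<open>1 \<le> b\<^sup>2\<close> by (intro power_increasing) (simp_all add: k_def)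
    finally show ?thesis .
  qed
  have "real n + 3 \<le> 32 ^ k"
    using add_three_le_pow[of n] unfolding k_def by (metis of_nat_add of_nat_le_iff of_nat_numeral of_nat_power)
  have "(real n + 1) * b * elim_bound n (2 * b\<^sup>2) \<le> (real n + 1) * b * X"
    using IH Suc.prems by (intro mult_left_mono) simp_all
  moreover have "b \<le> b * X" "1 \<le> b * X"
    using Suc.prems \<open>1 \<le> X\<close> by (simp_all add: mult_ge1_I)
  ultimately have "elim_bound (Suc n) b \<le> (real n + 1) * b * X + b * X + b * X"
    unfolding elim_bound.simps by linarith
  also have "\<dots> = (real n + 3) * (b * X)" by (simp add: algebra_simps)
  also have "\<dots> \<le> 32 ^ k * ((b\<^sup>2) ^ k * X)"
    using \<open>real n + 3 \<le> 32 ^ k\<close> \<open>b \<le> (b\<^sup>2) ^ k\<close> \<open>1 \<le> X\<close> Suc.prems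
    by (intro mult_mono) simp_all
  also have "\<dots> = (8 * b\<^sup>2 * 32 * b\<^sup>2) ^ k"
    by (simp only: X_def power_mult_distrib mult_ac)
  also have "8 * b\<^sup>2 * 32 * b\<^sup>2 = (4 * b) ^ 4"
    by (simp add: power2_eq_square power4_eq_xxxx)
  also have "((4 * b) ^ 4) ^ k = (4 * b) ^ 4 ^ Suc n"
    by (simp add: k_def power_mult)
  finally show ?case .
qed

lemma two_mult_le_two_pow: "1 \<le> N \<Longrightarrow> 2 * N \<le> (2::nat) ^ N"
proof -
  assume "1 \<le> N"
  then have "N \<le> 2 ^ (N - 1)" using less_exp[of "N - 1"] by linarith
  then have "2 * N \<le> 2 * 2 ^ (N - 1)" by simp
  also have "\<dots> = 2 ^ N" using \<open>1 \<le> N\<close> by (simp flip: power_Suc)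
  finally show ?thesis .
qed

lemma elim_bound_le_double_exp:
  assumes "1 \<le> N" "n \<le> N"
  shows "elim_bound n (real N) \<le> 2 ^ 2 ^ (3 * N)"
proof -
  have "4 * N \<le> (2::nat) ^ (2 * N)"
    using two_mult_le_two_pow[OF assms(1)] power_increasing[of "N + 1" "2 * N" "2::nat"] assms(1)
    by simp
  have "(4 * N) ^ 4 ^ n \<le> (4 * N) ^ 4 ^ N"
    using assms by (intro power_increasing) simp_all
  also have "\<dots> \<le> ((2::nat) ^ (2 * N)) ^ 4 ^ N"
    using \<open>4 * N \<le> 2 ^ (2 * N)\<close> by (rule power_mono) simp
  also have "\<dots> = 2 ^ (2 * N * 2 ^ (2 * N))"
    by (simp add: power_mult)
  also have "\<dots> \<le> 2 ^ (2 ^ N * 2 ^ (2 * N))"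
    using two_mult_le_two_pow[OF assms(1)] by (intro power_increasing) simp_all
  also have "\<dots> = 2 ^ 2 ^ (3 * N)"
    by (simp flip: power_add)
  finally have "real ((4 * N) ^ 4 ^ n) \<le> real (2 ^ 2 ^ (3 * N))"
    by (simp only: of_nat_le_iff)
  then show ?thesis
    using elim_bound_le[of "real N" n] assms(1) by simp
qed

(* tlin x t is the affine piece of t that is active at x; tforms x t collects the differences
   whose signs decide which argument of each meet and join is active. *)
fun tlin :: "(nat \<Rightarrow> real) \<Rightarrow> pterm \<Rightarrow> aform" where
  "tlin x (Var i) = avar i"
| "tlin x Zero = aconst 0"
| "tlin x MinusOne = aconst (-1)"
| "tlin x (Add s t) = aadd (tlin x s) (tlin x t)"
| "tlin x (Neg t) = aneg (tlin x t)"
| "tlin x (Meet s t) = (if teval x s \<le> teval x t then tlin x s else tlin x t)"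
| "tlin x (Join s t) = (if teval x s \<le> teval x t then tlin x t else tlin x s)"

fun tforms :: "(nat \<Rightarrow> real) \<Rightarrow> pterm \<Rightarrow> aform set" where
  "tforms x (Var i) = {}"
| "tforms x Zero = {}"
| "tforms x MinusOne = {}"
| "tforms x (Add s t) = tforms x s \<union> tforms x t"
| "tforms x (Neg t) = tforms x t"
| "tforms x (Meet s t) = insert (adiff (tlin x s) (tlin x t)) (tforms x s \<union> tforms x t)"
| "tforms x (Join s t) = insert (adiff (tlin x s) (tlin x t)) (tforms x s \<union> tforms x t)"

fun fforms :: "(nat \<Rightarrow> real) \<Rightarrow> pform \<Rightarrow> aform set" where
  "fforms x (Eq s t) = insert (adiff (tlin x s) (tlin x t)) (tforms x s \<union> tforms x t)"
| "fforms x (FNot f) = fforms x f"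
| "fforms x (FAnd f g) = fforms x f \<union> fforms x g"
| "fforms x (FOr f g) = fforms x f \<union> fforms x g"

lemma signs_agree_refl [simp]: "signs_agree V F x x"
  by (simp add: signs_agree_def)

lemma signs_agree_insert [simp]:
  "signs_agree V (insert L F) x y \<longleftrightarrow> sgn (aeval V L y) = sgn (aeval V L x) \<and> signs_agree V F x y"
  by (simp add: signs_agree_def)

lemma signs_agree_Un [simp]:
  "signs_agree V (F \<union> G) x y \<longleftrightarrow> signs_agree V F x y \<and> signs_agree V G x y"
  by (auto simp: signs_agree_def)

lemma le_iff_of_sgn_adiff_eq:
  assumes "sgn (aeval V (adiff L1 L2) y) = sgn (aeval V (adiff L1 L2) x)"
  shows "aeval V L1 y \<le> aeval V L2 y \<longleftrightarrow> aeval V L1 x \<le> aeval V L2 x"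
  using assms sgn_le_0_iff[of "aeval V L1 y - aeval V L2 y"] sgn_le_0_iff[of "aeval V L1 x - aeval V L2 x"]
  by auto

lemma teval_tlin:
  assumes "finite V"
  shows "tvars t \<subseteq> V \<Longrightarrow> signs_agree V (tforms x t) x y \<Longrightarrow> teval y t = aeval V (tlin x t) y"
proof (induction t arbitrary: y)
  case (Meet s t)
  have "teval z s = aeval V (tlin x s) z" "teval z t = aeval V (tlin x t) z" if "z \<in> {x, y}" for z
    using Meet.IH[of z] Meet.prems that by auto
  moreover have "aeval V (tlin x s) y \<le> aeval V (tlin x t) y \<longleftrightarrow> aeval V (tlin x s) x \<le> aeval V (tlin x t) x"
    using Meet.prems(2) by (intro le_iff_of_sgn_adiff_eq) simp
  ultimately show ?case by (simp add: min_def)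
next
  case (Join s t)
  have "teval z s = aeval V (tlin x s) z" "teval z t = aeval V (tlin x t) z" if "z \<in> {x, y}" for z
    using Join.IH[of z] Join.prems that by auto
  moreover have "aeval V (tlin x s) y \<le> aeval V (tlin x t) y \<longleftrightarrow> aeval V (tlin x s) x \<le> aeval V (tlin x t) x"
    using Join.prems(2) by (intro le_iff_of_sgn_adiff_eq) simp
  ultimately show ?case by (simp add: max_def)
qed (use assms in simp_all)

lemma fholds_iff_of_signs_agree:
  assumes "finite V"
  shows "fvars \<Phi> \<subseteq> V \<Longrightarrow> signs_agree V (fforms x \<Phi>) x y \<Longrightarrow> fholds y \<Phi> \<longleftrightarrow> fholds x \<Phi>"
proof (induction \<Phi>)
  case (Eq s t)
  have "teval z s = aeval V (tlin x s) z" "teval z t = aeval V (tlin x t) z" if "z \<in> {x, y}" for z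
    using teval_tlin[OF assms] Eq.prems that by auto
  moreover have "sgn (aeval V (tlin x s) y - aeval V (tlin x t) y) = sgn (aeval V (tlin x s) x - aeval V (tlin x t) x)"
    using Eq.prems(2) by simp
  ultimately show ?case by (auto simp: sgn_eq_0_iff)
qed auto

lemma abounded_tlin: "abounded (int (tsize t)) (tlin x t)"
proof (induction t)
  case (Add s t)
  then show ?case using abounded_aadd by fastforce
next
  case (Neg t)
  then show ?case by (simp add: abounded_aneg)
next
  case (Meet s t)
  then show ?case using abounded_mono by fastforce
next
  case (Join s t)
  then show ?case using abounded_mono by fastforce
qed (simp_all add: abounded_def avar_def aconst_def)

lemma abounded_tforms: "L \<in> tforms x t \<Longrightarrow> abounded (int (tsize t)) L"
  by (induction t) (auto intro: abounded_mono abounded_adiff[OF abounded_tlin abounded_tlin])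

lemma abounded_fforms: "L \<in> fforms x \<Phi> \<Longrightarrow> abounded (int (fsize \<Phi>)) L"
  by (induction \<Phi>)
    (auto intro: abounded_mono abounded_adiff[OF abounded_tlin abounded_tlin] dest: abounded_tforms)

lemma finite_fforms: "finite (fforms x \<Phi>)"
proof -
  have "finite (tforms x t)" for t by (induction t) auto
  then show ?thesis by (induction \<Phi>) auto
qed

lemma finite_fvars: "finite (fvars \<Phi>)"
proof -
  have "finite (tvars t)" for t by (induction t) auto
  then show ?thesis by (induction \<Phi>) auto
qed

lemma card_fvars_le_fsize: "card (fvars \<Phi>) \<le> fsize \<Phi>"
proof -
  have "card (tvars t) \<le> tsize t" for t
    by (induction t) (auto intro: card_Un_le[THEN order_trans])
  then show ?thesis
    by (induction \<Phi>) (auto intro: card_Un_le[THEN order_trans] add_mono)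
qed

lemma two_le_fsize: "2 \<le> fsize \<Phi>"
proof -
  have "1 \<le> tsize t" for t by (induction t) auto
  then have "2 \<le> tsize s + tsize t" for s t by (metis add_mono one_add_one)
  then show ?thesis by (induction \<Phi>) auto
qed

lemma bounded_model:
  assumes "fholds x \<Phi>"
  shows "\<exists>a. fholds a \<Phi> \<and> (\<forall>i. \<bar>a i\<bar> \<le> 2 ^ 2 ^ (3 * fsize \<Phi>))"
proof -
  have "1 \<le> int (fsize \<Phi>)" using two_le_fsize[of \<Phi>] by simp
  then have "\<exists>y. signs_agree (fvars \<Phi>) (fforms x \<Phi>) x y \<and>
      (\<forall>i. \<bar>y i\<bar> \<le> elim_bound (card (fvars \<Phi>)) (of_int (int (fsize \<Phi>))))"
    using abounded_fforms by (intro signs_agree_at_bounded_point finite_fvars finite_fforms) auto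
  then obtain y where agree: "signs_agree (fvars \<Phi>) (fforms x \<Phi>) x y"
    and y_bounded: "\<forall>i. \<bar>y i\<bar> \<le> elim_bound (card (fvars \<Phi>)) (real (fsize \<Phi>))"
    by auto
  have "fholds y \<Phi>"
    using fholds_iff_of_signs_agree[OF finite_fvars order_refl agree] assms by simp
  moreover have "elim_bound (card (fvars \<Phi>)) (real (fsize \<Phi>)) \<le> 2 ^ 2 ^ (3 * fsize \<Phi>)"
    using two_le_fsize[of \<Phi>] card_fvars_le_fsize[of \<Phi>] by (intro elim_bound_le_double_exp) simp_all
  ultimately show ?thesis using y_bounded by (blast intro: order_trans)
qed

lemma ibits_two_pow: "ibits (2 ^ k) = k + 2"
proof -
  have "nbits (2 ^ k) = k + 1" by (induction k) simp_all
  then show ?thesis by (simp add: ibits_def nat_power_eq)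
qed

theorem mainTheorem3:
  "\<exists>c::int. \<forall>(n::nat) (\<Phi>::pform).
     fvars \<Phi> \<subseteq> {..<n} \<longrightarrow>
     (\<exists>x::nat \<Rightarrow> real. fholds x \<Phi>) \<longrightarrow>
     (\<exists>(M::int) (a::nat \<Rightarrow> real).
        fholds a \<Phi> \<and>
        (\<forall>i<n. - ((2::real) powr of_int M) \<le> a i \<and> a i \<le> (2::real) powr of_int M) \<and>
        real (ibits M) \<le> real_of_int c * real (fsize \<Phi>) * log 2 (real (fsize \<Phi>)))"
proof (rule exI[of _ 5], intro allI impI)
  fix n \<Phi> assume "fvars \<Phi> \<subseteq> {..<n}" and "\<exists>x. fholds x \<Phi>"
  define N where "N = fsize \<Phi>"
  obtain a where "fholds a \<Phi>" and a_bounded: "\<forall>i. \<bar>a i\<bar> \<le> 2 ^ 2 ^ (3 * N)"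
    using bounded_model \<open>\<exists>x. fholds x \<Phi>\<close> unfolding N_def by blast
  define M :: int where "M = 2 ^ (3 * N)"
  have "(2::real) powr of_int M = 2 ^ 2 ^ (3 * N)"
    using powr_realpow[of 2 "2 ^ (3 * N)"] by (simp add: M_def)
  then have "\<forall>i<n. - ((2::real) powr of_int M) \<le> a i \<and> a i \<le> 2 powr of_int M"
    using a_bounded by (simp add: abs_le_iff minus_le_iff)
  moreover have "real (ibits M) \<le> 5 * real N * log 2 (real N)"
  proof -
    have "2 \<le> N" using two_le_fsize[of \<Phi>] by (simp add: N_def)
    then have "real (ibits M) \<le> 5 * real N * 1" by (simp add: M_def ibits_two_pow)
    also have "\<dots> \<le> 5 * real N * log 2 (real N)"
      using \<open>2 \<le> N\<close> by (intro mult_left_mono) simp_all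
    finally show ?thesis .
  qed
  ultimately show "\<exists>M a. fholds a \<Phi> \<and>
      (\<forall>i<n. - ((2::real) powr of_int M) \<le> a i \<and> a i \<le> 2 powr of_int M) \<and>
      real (ibits M) \<le> real_of_int 5 * real (fsize \<Phi>) * log 2 (real (fsize \<Phi>))"
    using \<open>fholds a \<Phi>\<close> unfolding N_def by auto
qed

end
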